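(* Let $\mu\in L^\infty(\mathbb{D})$ with $\|\mu\|_{L^\infty(\mathbb{D})}\le1$ and put $g=\mathbf{P}\mu$. Then for every $t\in\mathbb{C}$ with $|t|\le\pi/16$, \[ \int_\mathbb{D}\big|\mathrm{e}^{t g(z)}\big|\,\mathrm{d}A(z)\le 4 . \]
   Context: $\mathbb{D}$ is the open unit disk, $\mathrm{d}A$ is normalized area measure ($\mathrm{d}A=\pi^{-1}\mathrm{d}x\,\mathrm{d}y$). For $\mu\in L^1(\mathbb{D})$, the Bergman projection is $\mathbf{P}\mu(z)=\int_\mathbb{D}\frac{\mu(w)}{(1-z\bar w)^2}\,\mathrm{d}A(w)$, $z\in\mathbb{D}$. *)

theory Defs
  imports "HOL-Analysis.Analysis"
begin

abbreviation unit_disk :: "complex set" where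
  "unit_disk \<equiv> ball 0 1"

text \<open>Bergman projection with respect to normalized area measure dA = pi^-1 dx dy
  (Lebesgue measure on the complex plane divided by pi).\<close>
definition bergman_proj :: "(complex \<Rightarrow> complex) \<Rightarrow> complex \<Rightarrow> complex" where
  "bergman_proj \<mu> z =
     complex_of_real (1 / pi) *
       (LINT w : unit_disk | lebesgue. \<mu> w / (1 - z * cnj w) ^ 2)"

end

theory Submission
  imports Defs
begin

text \<open>
  The integral over the disc of the modulus |1 - z cnj w|^-2 of the Bergman kernel is at most
  pi (3 + 2 ln (1 / (1 - |z|))): since |1 - z cnj w| = |z| dist (1 / cnj z) w, it is an
  integral of dist^-2 over a set of area pi avoiding a disc of radius (1 - |z|) / |z|,
  which the layer-cake formula bounds by comparing with annuli.  Hence |P mu (z)| has the same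
  logarithmic bound, |exp (t P mu (z))| \<le> exp (3 |t|) (1 - |z|) powr (-2 |t|), and the
  radial integral of (1 - |z|) powr -\<beta> over the disc is 2 pi / ((1 - \<beta>) (2 - \<beta>)).
  For |t| \<le> pi / 16 the resulting constant is below 4.
\<close>

lemma emeasure_ball_complex: "0 \<le> r \<Longrightarrow> emeasure lborel (ball (c::complex) r) = ennreal (pi * r\<^sup>2)"
  using emeasure_ball[of r c] by (simp add: unit_ball_vol_2)

lemma emeasure_cball_complex: "0 \<le> r \<Longrightarrow> emeasure lborel (cball (c::complex) r) = ennreal (pi * r\<^sup>2)"
  using emeasure_cball[of r c] by (simp add: unit_ball_vol_2)

lemma emeasure_unit_disk: "emeasure lborel unit_disk = ennreal pi"
  using emeasure_ball_complex[of 1 0] by simp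

lemma emeasure_cball_diff_ball_complex:
  assumes "0 \<le> d" "d \<le> s"
  shows "emeasure lborel (cball (c::complex) s - ball c d) = ennreal (pi * (s\<^sup>2 - d\<^sup>2))"
proof -
  have "emeasure lborel (cball c s - ball c d) = emeasure lborel (cball c s) - emeasure lborel (ball c d)"
    using assms by (intro emeasure_Diff) (auto simp: emeasure_ball_complex)
  then show ?thesis
    using assms by (simp add: emeasure_ball_complex emeasure_cball_complex ennreal_minus power_mono right_diff_distrib)
qed

lemma emeasure_unit_disk_diff_ball:
  assumes "0 \<le> s"
  shows "emeasure lborel (unit_disk - ball 0 s) = ennreal (pi * (1 - s\<^sup>2))"
proof (cases "s \<le> 1")
  case True
  then show ?thesis
    using assms by (subst emeasure_Diff)
      (auto simp: emeasure_unit_disk emeasure_ball_complex ennreal_minus power_le_one right_diff_distrib)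
next
  case False
  then have "unit_disk - ball 0 s = {}" and "pi * (1 - s\<^sup>2) \<le> 0"
    using one_le_power[of s 2] by (auto intro: mult_nonneg_nonpos)
  then show ?thesis
    by (simp only: emeasure_empty ennreal_neg)
qed

section \<open>Layer-cake formulas\<close>

lemma nn_integral_layer_cake_cball:
  fixes A :: "'a::euclidean_space set" and \<phi> :: "real \<Rightarrow> ennreal"
  assumes [measurable]: "A \<in> sets lborel" "\<phi> \<in> borel_measurable borel"
  shows "(\<integral>\<^sup>+w\<in>A. (\<integral>\<^sup>+s\<in>{dist c w..}. \<phi> s \<partial>lborel) \<partial>lborel)
       = (\<integral>\<^sup>+s. \<phi> s * emeasure lborel (A \<inter> cball c s) \<partial>lborel)"
proof -
  define F where "F w s = (if w \<in> A \<and> dist c w \<le> s then \<phi> s else 0)" for w s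
  have "case_prod F \<in> borel_measurable (lborel \<Otimes>\<^sub>M lborel)"
    unfolding F_def by measurable
  then have "(\<integral>\<^sup>+w. (\<integral>\<^sup>+s. F w s \<partial>lborel) \<partial>lborel) = (\<integral>\<^sup>+s. (\<integral>\<^sup>+w. F w s \<partial>lborel) \<partial>lborel)"
    by (rule lborel_pair.Fubini'[symmetric])
  moreover have "(\<integral>\<^sup>+w. F w s \<partial>lborel) = \<phi> s * emeasure lborel (A \<inter> cball c s)" for s
    using assms(1) by (subst nn_integral_cmult_indicator[symmetric])
      (auto intro!: nn_integral_cong simp: F_def indicator_def)
  moreover have "(\<integral>\<^sup>+s. F w s \<partial>lborel) = (\<integral>\<^sup>+s\<in>{dist c w..}. \<phi> s \<partial>lborel) * indicator A w" for w
    by (auto intro!: nn_integral_cong simp: F_def indicator_def)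
  ultimately show ?thesis
    by (simp add: mult.commute)
qed

lemma nn_integral_layer_cake_ball_compl:
  fixes A :: "'a::euclidean_space set" and \<phi> :: "real \<Rightarrow> ennreal"
  assumes [measurable]: "A \<in> sets lborel" "\<phi> \<in> borel_measurable borel"
  shows "(\<integral>\<^sup>+w\<in>A. (\<integral>\<^sup>+s\<in>{0..dist c w}. \<phi> s \<partial>lborel) \<partial>lborel)
       = (\<integral>\<^sup>+s\<in>{0..}. \<phi> s * emeasure lborel (A - ball c s) \<partial>lborel)"
proof -
  define F where "F w s = (if w \<in> A \<and> 0 \<le> s \<and> s \<le> dist c w then \<phi> s else 0)" for w s
  have "case_prod F \<in> borel_measurable (lborel \<Otimes>\<^sub>M lborel)"
    unfolding F_def by measurable
  then have "(\<integral>\<^sup>+w. (\<integral>\<^sup>+s. F w s \<partial>lborel) \<partial>lborel) = (\<integral>\<^sup>+s. (\<integral>\<^sup>+w. F w s \<partial>lborel) \<partial>lborel)"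
    by (rule lborel_pair.Fubini'[symmetric])
  moreover have "(\<integral>\<^sup>+w. F w s \<partial>lborel) = \<phi> s * emeasure lborel (A - ball c s) * indicator {0..} s" for s
    using assms(1) by (subst nn_integral_cmult_indicator[symmetric])
      (auto intro!: nn_integral_cong simp: F_def indicator_def)
  moreover have "(\<integral>\<^sup>+s. F w s \<partial>lborel) = (\<integral>\<^sup>+s\<in>{0..dist c w}. \<phi> s \<partial>lborel) * indicator A w" for w
    by (auto intro!: nn_integral_cong simp: F_def indicator_def)
  ultimately show ?thesis
    by (simp add: mult.commute)
qed

section \<open>The integral of the modulus of the Bergman kernel\<close>

lemma nn_integral_atLeast_two_div_cube:
  fixes r :: real assumes "0 < r"
  shows "(\<integral>\<^sup>+s\<in>{r..}. ennreal (2 / s ^ 3) \<partial>lborel) = ennreal (1 / r\<^sup>2)"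
proof -
  have "(\<integral>\<^sup>+s. ennreal (2 / s ^ 3) * indicator {r..} s \<partial>lborel) = ennreal (0 - (- 1 / r\<^sup>2))"
    using assms
    by (intro nn_integral_FTC_atLeast)
       (auto intro!: derivative_eq_intros simp: field_simps power_def eval_nat_numeral, real_asymp)
  then show ?thesis by simp
qed

lemma inverse_one_plus_sq_le_ln:
  fixes d :: real assumes "0 < d"
  shows "1 / (1 + d\<^sup>2) \<le> ln (1 + d\<^sup>2) - 2 * ln d"
proof -
  have pos: "0 < 1 + d\<^sup>2"
    by (intro add_pos_nonneg) auto
  have "ln (d\<^sup>2 / (1 + d\<^sup>2)) \<le> d\<^sup>2 / (1 + d\<^sup>2) - 1"
    using assms pos by (intro ln_le_minus_one divide_pos_pos) auto
  moreover have "ln (d\<^sup>2 / (1 + d\<^sup>2)) = 2 * ln d - ln (1 + d\<^sup>2)"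
    using assms pos by (simp add: ln_div ln_realpow)
  moreover have "d\<^sup>2 / (1 + d\<^sup>2) - 1 = - (1 / (1 + d\<^sup>2))"
    using pos by (simp add: field_simps)
  ultimately show ?thesis
    by linarith
qed

lemma nn_integral_Icc_sq_diff_div_cube:
  fixes d :: real assumes "0 < d"
  shows "(\<integral>\<^sup>+s\<in>{d..sqrt (1 + d\<^sup>2)}. ennreal (2 * (s\<^sup>2 - d\<^sup>2) / s ^ 3) \<partial>lborel)
       = ennreal (ln (1 + d\<^sup>2) - 2 * ln d - 1 / (1 + d\<^sup>2))"
proof -
  define S where "S = sqrt (1 + d\<^sup>2)"
  have "d < S"
    unfolding S_def by (rule real_less_rsqrt) simp
  have "(\<integral>\<^sup>+s\<in>{d..S}. ennreal (2 * (s\<^sup>2 - d\<^sup>2) / s ^ 3) \<partial>lborel)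
      = ennreal ((2 * ln S + d\<^sup>2 / S\<^sup>2) - (2 * ln d + d\<^sup>2 / d\<^sup>2))"
    using assms \<open>d < S\<close>
    by (intro nn_integral_FTC_Icc)
       (auto intro!: derivative_eq_intros divide_nonneg_pos mult_mono
         simp: field_simps power_def eval_nat_numeral)
  also have "(2 * ln S + d\<^sup>2 / S\<^sup>2) - (2 * ln d + d\<^sup>2 / d\<^sup>2) = ln (1 + d\<^sup>2) - 2 * ln d - 1 / (1 + d\<^sup>2)"
  proof -
    have "0 < 1 + d\<^sup>2"
      by (intro add_pos_nonneg) auto
    moreover have "2 * ln S = ln (1 + d\<^sup>2)"
      unfolding S_def by (simp add: ln_sqrt)
    ultimately show ?thesis
      using assms by (simp add: S_def field_simps)
  qed
  finally show ?thesis
    by (simp add: S_def)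
qed

lemma nn_integral_min_sq_diff_div_cube_le:
  fixes d :: real assumes "0 < d"
  shows "(\<integral>\<^sup>+s\<in>{d..}. ennreal (2 * min 1 (s\<^sup>2 - d\<^sup>2) / s ^ 3) \<partial>lborel)
       \<le> ennreal (ln (1 + d\<^sup>2) - 2 * ln d)"
proof -
  define S where "S = sqrt (1 + d\<^sup>2)"
  have "d < S"
    unfolding S_def by (rule real_less_rsqrt) simp
  then have "0 < S"
    using assms by simp
  have S2: "S\<^sup>2 = 1 + d\<^sup>2"
    unfolding S_def by simp
  have "(\<integral>\<^sup>+s\<in>{d..}. ennreal (2 * min 1 (s\<^sup>2 - d\<^sup>2) / s ^ 3) \<partial>lborel)
      \<le> (\<integral>\<^sup>+s. ennreal (2 * (s\<^sup>2 - d\<^sup>2) / s ^ 3) * indicator {d..S} s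
               + ennreal (2 / s ^ 3) * indicator {S..} s \<partial>lborel)"
  proof (intro nn_integral_mono)
    fix s :: real
    consider "s < d" | "d \<le> s" "s \<le> S" | "S < s"
      by linarith
    then show "ennreal (2 * min 1 (s\<^sup>2 - d\<^sup>2) / s ^ 3) * indicator {d..} s
        \<le> ennreal (2 * (s\<^sup>2 - d\<^sup>2) / s ^ 3) * indicator {d..S} s + ennreal (2 / s ^ 3) * indicator {S..} s"
    proof cases
      case 2
      then have "min 1 (s\<^sup>2 - d\<^sup>2) = s\<^sup>2 - d\<^sup>2"
        using S2 power_mono[of s S 2] assms by simp
      then show ?thesis
        using 2 by (simp add: add_increasing2)
    next
      case 3
      then have "min 1 (s\<^sup>2 - d\<^sup>2) = 1"
        using S2 power_mono[of S s 2] \<open>0 < S\<close> by simp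
      then show ?thesis
        using 3 \<open>d < S\<close> by (simp add: add_increasing)
    qed simp
  qed
  also have "\<dots> = (\<integral>\<^sup>+s\<in>{d..S}. ennreal (2 * (s\<^sup>2 - d\<^sup>2) / s ^ 3) \<partial>lborel)
      + (\<integral>\<^sup>+s\<in>{S..}. ennreal (2 / s ^ 3) \<partial>lborel)"
  proof (rule nn_integral_add)
    show "(\<lambda>s. ennreal (2 * (s\<^sup>2 - d\<^sup>2) / s ^ 3) * indicator {d..S} s) \<in> borel_measurable lborel"
      "(\<lambda>s. ennreal (2 / s ^ 3) * indicator {S..} s) \<in> borel_measurable lborel"
      by measurable
  qed
  also have "\<dots> = ennreal (ln (1 + d\<^sup>2) - 2 * ln d - 1 / (1 + d\<^sup>2)) + ennreal (1 / (1 + d\<^sup>2))"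
    using nn_integral_Icc_sq_diff_div_cube[OF assms] nn_integral_atLeast_two_div_cube[OF \<open>0 < S\<close>]
    by (simp add: S_def)
  also have "\<dots> = ennreal (ln (1 + d\<^sup>2) - 2 * ln d)"
    using inverse_one_plus_sq_le_ln[OF assms] add_pos_nonneg[of 1 "d\<^sup>2"]
    by (simp flip: ennreal_plus)
  finally show ?thesis .
qed

lemma emeasure_inter_cball_le:
  fixes A :: "complex set"
  assumes "A \<in> sets lborel" "emeasure lborel A \<le> ennreal pi" "0 \<le> d" "A \<inter> ball q d = {}"
  shows "emeasure lborel (A \<inter> cball q s) \<le> ennreal (pi * min 1 (s\<^sup>2 - d\<^sup>2))"
proof (cases "d \<le> s")
  case True
  have "emeasure lborel (A \<inter> cball q s) \<le> emeasure lborel (cball q s - ball q d)"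
    using assms(4) by (intro emeasure_mono) auto
  also have "\<dots> = ennreal (pi * (s\<^sup>2 - d\<^sup>2))"
    using assms(3) True by (rule emeasure_cball_diff_ball_complex)
  finally have "emeasure lborel (A \<inter> cball q s) \<le> ennreal (pi * (s\<^sup>2 - d\<^sup>2))" .
  moreover have "emeasure lborel (A \<inter> cball q s) \<le> ennreal pi"
    using assms(1,2) by (meson emeasure_mono inf_le1 order_trans)
  ultimately show ?thesis
    by (simp add: min_def)
next
  case False
  then have "A \<inter> cball q s = {}"
    using assms(4) by force
  then show ?thesis
    by simp
qed

text \<open>Writing 1 / r^2 as the integral of 2 / s^3 over [r, \<infinity>), only the areas of the sets
  \<open>A \<inter> cball q s\<close> matter, and these are at most those of the annuli \<open>cball q s - ball q d\<close>
  and of \<open>A\<close>.\<close>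
lemma nn_integral_inverse_dist_sq_le:
  fixes A :: "complex set"
  assumes A: "A \<in> sets lborel" "emeasure lborel A \<le> ennreal pi"
    and d: "0 < d" "A \<inter> ball q d = {}"
  shows "(\<integral>\<^sup>+w\<in>A. ennreal (1 / (dist q w)\<^sup>2) \<partial>lborel) \<le> ennreal (pi * (ln (1 + d\<^sup>2) - 2 * ln d))"
proof -
  have far: "d \<le> dist q w" if "w \<in> A" for w
    using d(2) that by (auto simp: not_less)
  have "(\<integral>\<^sup>+w\<in>A. ennreal (1 / (dist q w)\<^sup>2) \<partial>lborel)
      = (\<integral>\<^sup>+w\<in>A. (\<integral>\<^sup>+s\<in>{dist q w..}. ennreal (2 / s ^ 3) \<partial>lborel) \<partial>lborel)"
    using d(1) far
    by (intro set_nn_integral_cong refl) (simp add: nn_integral_atLeast_two_div_cube[OF order_less_le_trans])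
  also have "\<dots> = (\<integral>\<^sup>+s. ennreal (2 / s ^ 3) * emeasure lborel (A \<inter> cball q s) \<partial>lborel)"
    using A(1) by (intro nn_integral_layer_cake_cball) auto
  also have "\<dots> \<le> (\<integral>\<^sup>+s. ennreal pi * (ennreal (2 * min 1 (s\<^sup>2 - d\<^sup>2) / s ^ 3) * indicator {d..} s) \<partial>lborel)"
  proof (intro nn_integral_mono)
    fix s :: real
    show "ennreal (2 / s ^ 3) * emeasure lborel (A \<inter> cball q s)
        \<le> ennreal pi * (ennreal (2 * min 1 (s\<^sup>2 - d\<^sup>2) / s ^ 3) * indicator {d..} s)"
    proof (cases "d \<le> s")
      case True
      have "ennreal (2 / s ^ 3) * emeasure lborel (A \<inter> cball q s)
          \<le> ennreal (2 / s ^ 3) * ennreal (pi * min 1 (s\<^sup>2 - d\<^sup>2))"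
        using A d by (intro mult_left_mono emeasure_inter_cball_le) auto
      also have "\<dots> = ennreal pi * ennreal (2 * min 1 (s\<^sup>2 - d\<^sup>2) / s ^ 3)"
        using True d(1) by (simp add: ennreal_mult'[symmetric] mult_ac)
      finally show ?thesis
        using True by simp
    next
      case False
      then have "A \<inter> cball q s = {}"
        using far by force
      then show ?thesis
        by simp
    qed
  qed
  also have "\<dots> = ennreal pi * (\<integral>\<^sup>+s\<in>{d..}. ennreal (2 * min 1 (s\<^sup>2 - d\<^sup>2) / s ^ 3) \<partial>lborel)"
    by (rule nn_integral_cmult) measurable
  also have "\<dots> \<le> ennreal pi * ennreal (ln (1 + d\<^sup>2) - 2 * ln d)"
    using d(1) by (intro mult_left_mono nn_integral_min_sq_diff_div_cube_le) auto
  finally show ?thesis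
    by (simp add: ennreal_mult')
qed

lemma ln_ge_half_diff_inverse:
  fixes u :: real assumes "0 < u" "u \<le> 1"
  shows "(u - 1 / u) / 2 \<le> ln u"
proof -
  define g where "g = (\<lambda>v::real. ln v - (v - 1 / v) / 2)"
  have deriv: "(g has_real_derivative - (1 - 1 / v)\<^sup>2 / 2) (at v)" if "0 < v" for v
    unfolding g_def using that
    by (auto intro!: derivative_eq_intros simp: field_simps power2_eq_square)
  have "g 1 \<le> g u"
  proof (rule DERIV_nonpos_imp_nonincreasing[of u 1 g])
    fix v assume "u \<le> v"
    then show "\<exists>y. (g has_real_derivative y) (at v) \<and> y \<le> 0"
      using deriv assms by (intro exI[of _ "- (1 - 1 / v)\<^sup>2 / 2"]) auto
  qed (use assms in auto)
  then show ?thesis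
    by (simp add: g_def)
qed

lemma bergman_kernel_log_estimate:
  fixes \<rho> :: real assumes "0 < \<rho>" "\<rho> < 1"
  shows "(ln (1 + ((1 - \<rho>) / \<rho>)\<^sup>2) - 2 * ln ((1 - \<rho>) / \<rho>)) / \<rho>\<^sup>2 \<le> 3 + 2 * ln (1 / (1 - \<rho>))"
proof -
  define U where "U = - ln (1 - \<rho>)"
  have pos: "0 < \<rho>\<^sup>2 + (1 - \<rho>)\<^sup>2"
    using assms by (simp add: add_pos_nonneg)
  have "ln (1 + ((1 - \<rho>) / \<rho>)\<^sup>2) - 2 * ln ((1 - \<rho>) / \<rho>) = ln (\<rho>\<^sup>2 + (1 - \<rho>)\<^sup>2) + 2 * U"
  proof -
    have "1 + ((1 - \<rho>) / \<rho>)\<^sup>2 = (\<rho>\<^sup>2 + (1 - \<rho>)\<^sup>2) / \<rho>\<^sup>2"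
      using assms by (simp add: field_simps)
    then show ?thesis
      using assms pos by (simp add: U_def ln_div ln_realpow)
  qed
  moreover have "ln (\<rho>\<^sup>2 + (1 - \<rho>)\<^sup>2) \<le> - 2 * \<rho> * (1 - \<rho>)"
    using ln_le_minus_one[OF pos] by (simp add: algebra_simps power2_eq_square)
  moreover have "2 * U * (1 - \<rho>\<^sup>2) \<le> \<rho>\<^sup>2 + 2 * \<rho>"
  proof -
    have "U * (1 - \<rho>) \<le> \<rho> - \<rho>\<^sup>2 / 2"
      using ln_ge_half_diff_inverse[of "1 - \<rho>"] assms by (simp add: U_def field_simps power2_eq_square)
    have "2 * U * (1 - \<rho>\<^sup>2) = 2 * (U * (1 - \<rho>)) * (1 + \<rho>)"
      by (simp add: algebra_simps power2_eq_square)
    also have "\<dots> \<le> 2 * (\<rho> - \<rho>\<^sup>2 / 2) * (1 + \<rho>)"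
      using \<open>U * (1 - \<rho>) \<le> _\<close> assms by (intro mult_right_mono) auto
    also have "\<dots> = \<rho>\<^sup>2 + 2 * \<rho> - \<rho> ^ 3"
      by (simp add: algebra_simps power2_eq_square power3_eq_cube)
    also have "\<dots> \<le> \<rho>\<^sup>2 + 2 * \<rho>"
      using assms by simp
    finally show ?thesis .
  qed
  ultimately have "ln (1 + ((1 - \<rho>) / \<rho>)\<^sup>2) - 2 * ln ((1 - \<rho>) / \<rho>) \<le> (3 + 2 * U) * \<rho>\<^sup>2"
    by (simp only:) (simp add: algebra_simps power2_eq_square)
  moreover have "ln (1 / (1 - \<rho>)) = U"
    using assms by (simp add: U_def ln_div)
  ultimately show ?thesis
    using assms by (simp add: divide_le_eq)
qed

lemma norm_one_minus_mult_cnj: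
  fixes z w :: complex assumes "z \<noteq> 0"
  shows "norm (1 - z * cnj w) = norm z * dist (1 / cnj z) w"
proof -
  have "1 - z * cnj w = z * cnj (1 / cnj z - w)"
    using assms by (simp add: field_simps)
  then have "norm (1 - z * cnj w) = norm z * norm (cnj (1 / cnj z - w))"
    by (simp only: norm_mult)
  then show ?thesis
    by (simp only: complex_mod_cnj dist_norm)
qed

lemma unit_disk_inter_ball_reflection:
  fixes z :: complex assumes "0 < norm z" "norm z < 1"
  shows "unit_disk \<inter> ball (1 / cnj z) ((1 - norm z) / norm z) = {}"
proof -
  have "(1 - norm z) / norm z \<le> dist (1 / cnj z) w" if "norm w < 1" for w
  proof -
    have "(1 - norm z) / norm z = norm (1 / cnj z) - 1"
      using assms by (simp add: norm_divide field_simps)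
    also have "\<dots> \<le> dist (1 / cnj z) w"
      using that norm_triangle_ineq2[of "1 / cnj z" w] by (simp add: dist_norm)
    finally show ?thesis .
  qed
  then show ?thesis
    by (force simp: not_less)
qed

lemma nn_integral_bergman_kernel_le:
  fixes z :: complex assumes "z \<in> unit_disk"
  shows "(\<integral>\<^sup>+w\<in>unit_disk. ennreal (1 / (norm (1 - z * cnj w))\<^sup>2) \<partial>lborel)
       \<le> ennreal (pi * (3 + 2 * ln (1 / (1 - norm z))))"
proof (cases "z = 0")
  case True
  then show ?thesis
    using assms by (simp add: emeasure_unit_disk)
next
  case False
  define \<rho> where "\<rho> = norm z"
  define d where "d = (1 - \<rho>) / \<rho>"
  have \<rho>: "0 < \<rho>" "\<rho> < 1"
    using assms False by (auto simp: \<rho>_def)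
  have [measurable]: "unit_disk \<in> sets borel"
    by simp
  have "(\<integral>\<^sup>+w\<in>unit_disk. ennreal (1 / (norm (1 - z * cnj w))\<^sup>2) \<partial>lborel)
      = (\<integral>\<^sup>+w\<in>unit_disk. ennreal (1 / \<rho>\<^sup>2) * ennreal (1 / (dist (1 / cnj z) w)\<^sup>2) \<partial>lborel)"
    using False
    by (intro nn_integral_cong) (simp add: norm_one_minus_mult_cnj power_mult_distrib \<rho>_def flip: ennreal_mult)
  also have "\<dots> = ennreal (1 / \<rho>\<^sup>2) * (\<integral>\<^sup>+w\<in>unit_disk. ennreal (1 / (dist (1 / cnj z) w)\<^sup>2) \<partial>lborel)"
    by (subst nn_integral_cmult[symmetric]) (simp_all add: mult.assoc)
  also have "\<dots> \<le> ennreal (1 / \<rho>\<^sup>2) * ennreal (pi * (ln (1 + d\<^sup>2) - 2 * ln d))"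
    using \<rho> unit_disk_inter_ball_reflection[of z]
    by (intro mult_left_mono nn_integral_inverse_dist_sq_le) (auto simp: d_def \<rho>_def emeasure_unit_disk)
  also have "\<dots> = ennreal (pi * ((ln (1 + d\<^sup>2) - 2 * ln d) / \<rho>\<^sup>2))"
    by (simp flip: ennreal_mult')
  also have "\<dots> \<le> ennreal (pi * (3 + 2 * ln (1 / (1 - norm z))))"
    using bergman_kernel_log_estimate[OF \<rho>] by (intro ennreal_leI mult_left_mono) (auto simp: d_def \<rho>_def)
  finally show ?thesis .
qed

lemma norm_integral_le_nn_integral:
  fixes f :: "'a \<Rightarrow> 'b::{banach, second_countable_topology}"
  shows "norm (integral\<^sup>L M f) \<le> (\<integral>\<^sup>+x. norm (f x) \<partial>M)"
  by (cases "integrable M f") (auto simp: integral_norm_bound_ennreal not_integrable_integral_eq)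

lemma norm_bergman_proj_le:
  assumes "AE w in lebesgue. w \<in> unit_disk \<longrightarrow> norm (\<mu> w) \<le> 1" and "z \<in> unit_disk"
  shows "norm (bergman_proj \<mu> z) \<le> 3 + 2 * ln (1 / (1 - norm z))"
proof -
  define I where "I = (LINT w : unit_disk | lebesgue. \<mu> w / (1 - z * cnj w) ^ 2)"
  have "ennreal (norm I) \<le> (\<integral>\<^sup>+w. norm (indicator unit_disk w *\<^sub>R (\<mu> w / (1 - z * cnj w) ^ 2)) \<partial>lebesgue)"
    unfolding I_def set_lebesgue_integral_def by (rule norm_integral_le_nn_integral)
  also have "\<dots> \<le> (\<integral>\<^sup>+w\<in>unit_disk. ennreal (1 / (norm (1 - z * cnj w))\<^sup>2) \<partial>lebesgue)"
    using assms(1)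
    by (intro nn_integral_mono_AE, eventually_elim)
       (auto simp: indicator_def norm_divide norm_power intro!: divide_right_mono)
  also have "\<dots> = (\<integral>\<^sup>+w\<in>unit_disk. ennreal (1 / (norm (1 - z * cnj w))\<^sup>2) \<partial>lborel)"
    by (rule nn_integral_completion)
  also have "\<dots> \<le> ennreal (pi * (3 + 2 * ln (1 / (1 - norm z))))"
    using assms(2) by (rule nn_integral_bergman_kernel_le)
  finally have "norm I \<le> pi * (3 + 2 * ln (1 / (1 - norm z)))"
    using assms(2) by (subst (asm) ennreal_le_iff) auto
  then show ?thesis
    by (simp add: bergman_proj_def I_def norm_mult norm_divide divide_le_eq mult.commute)
qed

section \<open>A radial integral\<close>

lemma nn_integral_Icc_one_minus_powr:
  fixes \<beta> :: real assumes "0 \<le> \<beta>" "\<beta> < 1"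
  shows "(\<integral>\<^sup>+s\<in>{0..1}. ennreal ((1 - s) powr (- \<beta>) * (1 + s)) \<partial>lborel) = ennreal (2 / (1 - \<beta>) - 1 / (2 - \<beta>))"
proof -
  define G where "G s = - 2 * (1 - s) powr (1 - \<beta>) / (1 - \<beta>) + (1 - s) powr (2 - \<beta>) / (2 - \<beta>)" for s :: real
  have "((\<lambda>s. (1 - s) powr (- \<beta>) * (1 + s)) has_integral (G 1 - G 0)) {0..1}"
  proof (rule fundamental_theorem_of_calculus_interior)
    show "continuous_on {0..1} G"
      unfolding G_def using assms by (intro continuous_intros continuous_on_powr') auto
  next
    fix s :: real assume s: "s \<in> {0<..<1}"
    have "(G has_real_derivative 2 * (1 - s) powr (- \<beta>) - (1 - s) powr (1 - \<beta>)) (at s)"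
      unfolding G_def using s assms
      by (auto intro!: derivative_eq_intros simp: divide_simps) (simp add: algebra_simps)
    moreover have "(1 - s) powr (1 - \<beta>) = (1 - s) * (1 - s) powr (- \<beta>)"
      using s powr_add[of "1 - s" 1 "- \<beta>"] by simp
    ultimately have "(G has_real_derivative (1 - s) powr (- \<beta>) * (1 + s)) (at s)"
      by (simp add: algebra_simps)
    then show "(G has_vector_derivative (1 - s) powr (- \<beta>) * (1 + s)) (at s)"
      by (simp add: has_real_derivative_iff_has_vector_derivative)
  qed simp
  moreover have "G 1 - G 0 = 2 / (1 - \<beta>) - 1 / (2 - \<beta>)"
    using assms by (simp add: G_def)
  ultimately have "((\<lambda>s. if s \<in> {0..1} then (1 - s) powr (- \<beta>) * (1 + s) else 0)
      has_integral (2 / (1 - \<beta>) - 1 / (2 - \<beta>))) UNIV"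
    by (simp only: has_integral_restrict_UNIV)
  then have "((\<lambda>s. (1 - s) powr (- \<beta>) * (1 + s) * indicator {0..1} s)
      has_integral (2 / (1 - \<beta>) - 1 / (2 - \<beta>))) UNIV"
    by (rule has_integral_cong[THEN iffD1, rotated]) (simp add: indicator_def)
  then show ?thesis
    unfolding nn_integral_set_ennreal by (intro nn_integral_has_integral_lborel) (auto simp: indicator_def)
qed

lemma nn_integral_Icc_one_minus_powr_derivative:
  fixes \<beta> r :: real assumes "0 \<le> \<beta>" "0 \<le> r" "r < 1"
  shows "(\<integral>\<^sup>+s\<in>{0..r}. ennreal (\<beta> * (1 - s) powr (- \<beta> - 1)) \<partial>lborel) = ennreal ((1 - r) powr (- \<beta>) - 1)"
  using assms
  by (subst nn_integral_FTC_Icc[where F = "\<lambda>s. (1 - s) powr (- \<beta>)"])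
     (auto intro!: derivative_eq_intros simp: algebra_simps)

lemma emeasure_unit_disk_diff_ball_weighted:
  fixes \<beta> s :: real assumes "0 \<le> \<beta>"
  shows "ennreal (\<beta> * (1 - s) powr (- \<beta> - 1)) * emeasure lborel (unit_disk - ball 0 s) * indicator {0..} s
       = ennreal (pi * \<beta>) * ennreal ((1 - s) powr (- \<beta>) * (1 + s)) * indicator {0..1} s"
proof (cases "0 \<le> s \<and> s < 1")
  case True
  have "\<beta> * (1 - s) powr (- \<beta> - 1) * (pi * (1 - s\<^sup>2))
      = pi * \<beta> * ((1 - s) powr (- \<beta> - 1) * (1 - s) * (1 + s))"
    by (simp add: power2_eq_square algebra_simps)
  also have "(1 - s) powr (- \<beta> - 1) * (1 - s) = (1 - s) powr (- \<beta>)"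
    using True powr_add[of "1 - s" "- \<beta> - 1" 1] by simp
  finally have eq: "\<beta> * (1 - s) powr (- \<beta> - 1) * (pi * (1 - s\<^sup>2))
      = pi * \<beta> * ((1 - s) powr (- \<beta>) * (1 + s))" .
  have "ennreal (\<beta> * (1 - s) powr (- \<beta> - 1)) * emeasure lborel (unit_disk - ball 0 s)
      = ennreal (\<beta> * (1 - s) powr (- \<beta> - 1) * (pi * (1 - s\<^sup>2)))"
    using True assms by (simp add: emeasure_unit_disk_diff_ball ennreal_mult')
  also have "\<dots> = ennreal (pi * \<beta>) * ennreal ((1 - s) powr (- \<beta>) * (1 + s))"
    unfolding eq using assms by (simp add: ennreal_mult')
  finally show ?thesis
    using True by simp
next
  case False
  then consider "s < 0" | "s = 1" | "1 < s"
    by linarith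
  then show ?thesis
  proof cases
    case 3
    then have "pi * (1 - s\<^sup>2) \<le> 0"
      using one_le_power[of s 2] by (auto intro: mult_nonneg_nonpos)
    then show ?thesis
      using 3 by (simp add: emeasure_unit_disk_diff_ball ennreal_neg)
  qed (auto simp: emeasure_unit_disk_diff_ball)
qed

text \<open>Write (1 - |z|) powr -\<beta> as 1 plus the integral of \<beta> (1 - s) powr (-\<beta> - 1) over [0, |z|];
  the layer-cake formula then integrates against the area pi (1 - s^2) of \<open>unit_disk - ball 0 s\<close>.\<close>
lemma nn_integral_unit_disk_one_minus_norm_powr:
  fixes \<beta> :: real assumes "0 \<le> \<beta>" "\<beta> < 1"
  shows "(\<integral>\<^sup>+z\<in>unit_disk. ennreal ((1 - norm z) powr (- \<beta>)) \<partial>lborel)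
       = ennreal (2 * pi / ((1 - \<beta>) * (2 - \<beta>)))"
proof -
  define \<phi> where "\<phi> s = ennreal (\<beta> * (1 - s) powr (- \<beta> - 1))" for s
  have [measurable]: "\<phi> \<in> borel_measurable borel" "unit_disk \<in> sets lborel"
    unfolding \<phi>_def by measurable
  have "ennreal ((1 - norm z) powr (- \<beta>)) = 1 + ennreal ((1 - norm z) powr (- \<beta>) - 1)"
    if "z \<in> unit_disk" for z
    using that assms powr_le1[of \<beta> "1 - norm z"] ennreal_plus[of 1 "(1 - norm z) powr (- \<beta>) - 1"]
    by (simp add: powr_minus one_le_inverse)
  then have "(\<integral>\<^sup>+z\<in>unit_disk. ennreal ((1 - norm z) powr (- \<beta>)) \<partial>lborel)
      = (\<integral>\<^sup>+z. indicator unit_disk z + ennreal ((1 - norm z) powr (- \<beta>) - 1) * indicator unit_disk z \<partial>lborel)"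
    by (intro nn_integral_cong) (simp add: indicator_def)
  also have "\<dots> = ennreal pi + (\<integral>\<^sup>+z\<in>unit_disk. ennreal ((1 - norm z) powr (- \<beta>) - 1) \<partial>lborel)"
    by (subst nn_integral_add) (simp_all add: emeasure_unit_disk)
  also have "(\<integral>\<^sup>+z\<in>unit_disk. ennreal ((1 - norm z) powr (- \<beta>) - 1) \<partial>lborel)
      = (\<integral>\<^sup>+z\<in>unit_disk. (\<integral>\<^sup>+s\<in>{0..dist 0 z}. \<phi> s \<partial>lborel) \<partial>lborel)"
    using assms by (intro set_nn_integral_cong refl) (simp add: \<phi>_def nn_integral_Icc_one_minus_powr_derivative)
  also have "\<dots> = (\<integral>\<^sup>+s\<in>{0..}. \<phi> s * emeasure lborel (unit_disk - ball 0 s) \<partial>lborel)"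
    by (intro nn_integral_layer_cake_ball_compl) measurable
  also have "\<dots> = (\<integral>\<^sup>+s\<in>{0..1}. ennreal (pi * \<beta>) * ennreal ((1 - s) powr (- \<beta>) * (1 + s)) \<partial>lborel)"
    using assms by (intro nn_integral_cong) (simp add: \<phi>_def emeasure_unit_disk_diff_ball_weighted)
  also have "\<dots> = ennreal (pi * \<beta>) * ennreal (2 / (1 - \<beta>) - 1 / (2 - \<beta>))"
    using assms by (simp add: nn_integral_cmult mult.assoc nn_integral_Icc_one_minus_powr)
  also have "ennreal pi + \<dots> = ennreal (2 * pi / ((1 - \<beta>) * (2 - \<beta>)))"
  proof -
    have nz: "1 - \<beta> \<noteq> 0" "2 - \<beta> \<noteq> 0"
      using assms by auto
    have "2 / (1 - \<beta>) - 1 / (2 - \<beta>) = (3 - \<beta>) / ((1 - \<beta>) * (2 - \<beta>))"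
      using nz by (simp add: divide_simps)
    then have "pi + pi * \<beta> * (2 / (1 - \<beta>) - 1 / (2 - \<beta>)) = 2 * pi / ((1 - \<beta>) * (2 - \<beta>))"
      using nz by (simp add: divide_simps) (simp add: algebra_simps)
    moreover have "0 \<le> 2 / (1 - \<beta>) - 1 / (2 - \<beta>)"
      using assms by (simp add: divide_simps)
    ultimately show ?thesis
      using assms by (simp flip: ennreal_mult ennreal_plus)
  qed
  finally show ?thesis .
qed

section \<open>Exponential integrability of the Bergman projection\<close>

lemma norm_exp_mult_bergman_proj_le:
  assumes "AE w in lebesgue. w \<in> unit_disk \<longrightarrow> norm (\<mu> w) \<le> 1" and "z \<in> unit_disk"
  shows "norm (exp (t * bergman_proj \<mu> z)) \<le> exp (3 * norm t) * (1 - norm z) powr (- (2 * norm t))"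
proof -
  have "norm (exp (t * bergman_proj \<mu> z)) = exp (Re (t * bergman_proj \<mu> z))"
    by simp
  also have "\<dots> \<le> exp (norm t * (3 + 2 * ln (1 / (1 - norm z))))"
  proof -
    have "Re (t * bergman_proj \<mu> z) \<le> norm t * norm (bergman_proj \<mu> z)"
      using complex_Re_le_cmod[of "t * bergman_proj \<mu> z"] by (simp add: norm_mult)
    also have "\<dots> \<le> norm t * (3 + 2 * ln (1 / (1 - norm z)))"
      using norm_bergman_proj_le[OF assms] by (rule mult_left_mono) simp
    finally show ?thesis
      by simp
  qed
  also have "\<dots> = exp (3 * norm t) * (1 - norm z) powr (- (2 * norm t))"
    using assms(2) by (simp add: powr_def ln_div algebra_simps flip: exp_add)
  finally show ?thesis .
qed

lemma nn_integral_norm_exp_mult_bergman_proj_le: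
  assumes "AE w in lebesgue. w \<in> unit_disk \<longrightarrow> norm (\<mu> w) \<le> 1" and "2 * norm t < 1"
  shows "(\<integral>\<^sup>+z\<in>unit_disk. ennreal (norm (exp (t * bergman_proj \<mu> z))) \<partial>lebesgue)
       \<le> ennreal (exp (3 * norm t) * (2 * pi / ((1 - 2 * norm t) * (2 - 2 * norm t))))"
proof -
  have [measurable]: "unit_disk \<in> sets borel"
    by simp
  have "(\<integral>\<^sup>+z\<in>unit_disk. ennreal (norm (exp (t * bergman_proj \<mu> z))) \<partial>lebesgue)
      = (\<integral>\<^sup>+z\<in>unit_disk. ennreal (norm (exp (t * bergman_proj \<mu> z))) \<partial>lborel)"
    by (rule nn_integral_completion)
  also have "\<dots> \<le> (\<integral>\<^sup>+z\<in>unit_disk. ennreal (exp (3 * norm t)) * ennreal ((1 - norm z) powr (- (2 * norm t))) \<partial>lborel)"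
    using norm_exp_mult_bergman_proj_le[OF assms(1)]
    by (intro nn_integral_mono) (simp add: indicator_def ennreal_mult'[symmetric])
  also have "\<dots> = ennreal (exp (3 * norm t)) * (\<integral>\<^sup>+z\<in>unit_disk. ennreal ((1 - norm z) powr (- (2 * norm t))) \<partial>lborel)"
    by (subst nn_integral_cmult[symmetric]) (simp_all add: mult.assoc)
  also have "\<dots> = ennreal (exp (3 * norm t)) * ennreal (2 * pi / ((1 - 2 * norm t) * (2 - 2 * norm t)))"
    using assms(2) by (simp add: nn_integral_unit_disk_one_minus_norm_powr)
  also have "\<dots> = ennreal (exp (3 * norm t) * (2 * pi / ((1 - 2 * norm t) * (2 - 2 * norm t))))"
    by (rule ennreal_mult'[symmetric]) simp
  finally show ?thesis .
qed

text \<open>Uses pi / 16 < 0.19635 and exp x \<le> 1 + x + x^2 on [0, 1].\<close>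
lemma exp_mult_bergman_constant_le:
  fixes a :: real assumes "0 \<le> a" "a \<le> pi / 16"
  shows "exp (3 * a) * (2 / ((1 - 2 * a) * (2 - 2 * a))) \<le> 4"
proof -
  have a: "a \<le> 19635 / 100000"
    using assms(2) pi_approx(2) by simp
  have "exp (3 * a) \<le> 1 + 3 * a + (3 * a)\<^sup>2"
    using assms(1) a by (intro exp_bound) auto
  also have "\<dots> \<le> 2 * ((1 - 2 * a) * (2 - 2 * a))"
  proof -
    have "a * a \<le> 1 / 5 * (1 / 5)"
      using assms(1) a by (intro mult_mono) auto
    then show ?thesis
      using a by (simp add: algebra_simps power2_eq_square)
  qed
  finally have "exp (3 * a) \<le> 2 * ((1 - 2 * a) * (2 - 2 * a))" .
  moreover have "0 < (1 - 2 * a) * (2 - 2 * a)"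
    using a by simp
  ultimately show ?thesis
    by (simp add: field_simps)
qed

theorem mainTheorem2:
  fixes \<mu> :: "complex \<Rightarrow> complex" and t :: complex
  assumes "set_borel_measurable lebesgue unit_disk \<mu>"
    and "AE w in lebesgue. w \<in> unit_disk \<longrightarrow> norm (\<mu> w) \<le> 1"
    and "norm t \<le> pi / 16"
  shows "ennreal (1 / pi) *
           (\<integral>\<^sup>+ z \<in> unit_disk. ennreal (norm (exp (t * bergman_proj \<mu> z))) \<partial>lebesgue)
         \<le> 4"
proof -
  have "2 * norm t < 1"
    using assms(3) pi_less_4 by simp
  then have "ennreal (1 / pi) * (\<integral>\<^sup>+ z \<in> unit_disk. ennreal (norm (exp (t * bergman_proj \<mu> z))) \<partial>lebesgue)
      \<le> ennreal (1 / pi) * ennreal (exp (3 * norm t) * (2 * pi / ((1 - 2 * norm t) * (2 - 2 * norm t))))"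
    using assms(2) by (intro mult_left_mono nn_integral_norm_exp_mult_bergman_proj_le) auto
  also have "\<dots> = ennreal (exp (3 * norm t) * (2 / ((1 - 2 * norm t) * (2 - 2 * norm t))))"
    by (subst ennreal_mult'[symmetric]) simp_all
  also have "\<dots> \<le> ennreal 4"
    using exp_mult_bergman_constant_le[OF norm_ge_zero assms(3)] by (rule ennreal_leI)
  finally show ?thesis
    by simp
qed

end
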